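(* There is a neighborhood $U_0$ of $(0,0)\in\mathbb{R}^k\times\mathbb{R}^{n-k}$ and a neighborhood $U_1$ of $p_0\in\mathcal{O}$ such that $$G:U_0\longrightarrow U_1$$ is a Lipschitz homeomorphism, with Lipschitz inverse.
   Context: Let $\Omega$ be a manifold of dimension $n$ and $\mathcal{E}\subset T\Omega$ a Lipschitz subbundle of fiber dimension $k<n$ which is involutive (brackets of Lipschitz sections are $L^\infty$ sections of $\mathcal{E}$). Fix $p_0\in\Omega$ and coordinates $x\in\mathbb{R}^n$ centered at $p_0=0$ on a neighborhood $\mathcal{O}$, in which $\mathcal{E}$ is spanned by Lipschitz vector fields of the form $$Y_i=\partial_i+\sum_{\ell\ge k+1} D_{i\ell}(x)\,\partial_\ell,\quad 1\le i\le k,$$ with $D_{i\ell}$ Lipschitz and $D_{i\ell}(0)=0$, and satisfying $[Y_i,Y_j]=0$ for $1\le i,j\le k$. For such commuting Lipschitz vector fields the local flows $\mathcal{F}^{t_j}_{Y_j}$ commute, and $y(t,x)=\mathcal{F}^{t_1}_{Y_1}\circ\cdots\circ\mathcal{F}^{t_k}_{Y_k}(x)$ is the unique solution of $\partial y/\partial t_j=Y_j(y)$, $y(0,x)=x$, defined for $|t_j|<\delta$ and $x$ in a compact subset, and is Lipschitz in $(t,x)$. Write $\mathcal{F}^t=\mathcal{F}^{t_1}_{Y_1}\circ\cdots\circ\mathcal{F}^{t_k}_{Y_k}$ and, for $z$ close to $0$ in $\mathbb{R}^{n-k}$ and $|t|<\delta$, define $$G(t,z)=y(t,0,z)=\mathcal{F}^t(0,z).$$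 *)

theory Defs
  imports "HOL-Analysis.Analysis"
begin

text \<open>Coordinates: R^n = R^k x R^(n-k) is modelled as the product type 'a x 'b,
 with 'a (dimension k) and 'b (dimension n-k) Euclidean spaces.
 For a basis vector i of 'a, the vector field
   Y_i = d_i + sum_l D_il d_l
 is the map x |-> (i, D i x).\<close>

definition coord_field :: "('a::euclidean_space \<Rightarrow> 'a \<times> 'b \<Rightarrow> 'b::euclidean_space)
     \<Rightarrow> 'a \<Rightarrow> 'a \<times> 'b \<Rightarrow> 'a \<times> 'b" where
  "coord_field D i x = (i, D i x)"

text \<open>Vanishing of the Lie bracket [X,Y] = DY.X - DX.Y of two Lipschitz vector
 fields on the open set Ob, as an L-infinity section, i.e. almost everywhere
 (Lipschitz fields are differentiable almost everywhere).\<close>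

definition bracket_zero_ae ::
  "('n::euclidean_space) set \<Rightarrow> ('n \<Rightarrow> 'n) \<Rightarrow> ('n \<Rightarrow> 'n) \<Rightarrow> bool" where
  "bracket_zero_ae Ob X Y \<longleftrightarrow>
     (AE x in lebesgue. x \<in> Ob \<longrightarrow>
        (\<exists>X' Y'. (X has_derivative X') (at x) \<and> (Y has_derivative Y') (at x) \<and>
                 Y' (X x) - X' (Y x) = 0))"

definition time_box :: "real \<Rightarrow> 'a::euclidean_space set" where
  "time_box \<delta> = {t. \<forall>j\<in>Basis. \<bar>t \<bullet> j\<bar> < \<delta>}"

end

theory Submission
  imports Defs "HOL-Homology.Invariance_of_Domain"
begin

text \<open>Every field \<open>Y\<^sub>j\<close> has first component \<open>e\<^sub>j\<close>, so the flow moves the first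
  coordinate by exactly \<open>t\<close> and \<open>G(t, z) = (t, \<dots>)\<close>. If the \<open>D\<^sub>i\<close> are
  \<open>C\<close>-Lipschitz and the flow is \<open>L\<close>-Lipschitz, the partial derivatives in \<open>t\<close> of
  \<open>y t x - y t x'\<close> are bounded by \<open>C L |x - x'|\<close>; integrating along a staircase path,
  \<open>y t\<close> differs from the identity by a map of Lipschitz constant at most \<open>1/2\<close> once \<open>t\<close>
  is small. With the exact first coordinate this makes \<open>G\<close> bi-Lipschitz near the
  origin, and invariance of domain makes its image open.\<close>

lemma has_vector_derivative_at_of_shifted:
  fixes g :: "real \<Rightarrow> 'c::real_normed_vector"
  assumes "((\<lambda>h. g (r + h)) has_vector_derivative v) (at 0)"
  shows "(g has_vector_derivative v) (at r)"
proof -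
  have "((\<lambda>x. x - r) has_vector_derivative 1) (at r)"
    by (auto intro!: derivative_eq_intros)
  from vector_diff_chain_at[OF this] have
    "((\<lambda>h. g (r + h)) \<circ> (\<lambda>x. x - r) has_vector_derivative 1 *\<^sub>R v) (at r)"
    using assms by simp
  then show ?thesis by (simp add: o_def)
qed

lemma norm_diff_le_closed_segment:
  fixes g :: "real \<Rightarrow> 'c::real_normed_vector"
  assumes deriv: "\<And>r. r \<in> closed_segment 0 c \<Longrightarrow>
                     ((\<lambda>h. g (r + h)) has_vector_derivative g' r) (at 0)"
    and bound: "\<And>r. r \<in> closed_segment 0 c \<Longrightarrow> norm (g' r) \<le> M"
  shows "norm (g c - g 0) \<le> M * \<bar>c\<bar>"
proof -
  have "norm (g c - g 0) \<le> M * norm (c - 0)"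
  proof (rule differentiable_bound[where f' = "\<lambda>r h. h *\<^sub>R g' r"])
    fix r assume r: "r \<in> closed_segment 0 c"
    have "(g has_vector_derivative g' r) (at r)"
      by (rule has_vector_derivative_at_of_shifted[OF deriv[OF r]])
    then show "(g has_derivative (\<lambda>h. h *\<^sub>R g' r)) (at r within closed_segment 0 c)"
      unfolding has_vector_derivative_def by (rule has_derivative_at_withinI)
    have "onorm (\<lambda>h::real. h *\<^sub>R g' r) = norm (g' r)"
      using onorm_scaleR_left[of "\<lambda>h::real. h" "g' r"] onorm_id[where 'a=real]
      by (simp add: id_def)
    then show "onorm (\<lambda>h::real. h *\<^sub>R g' r) \<le> M"
      using bound[OF r] by simp
  qed auto
  then show ?thesis by simp
qed

lemma inner_sum_Basis_subset:
  fixes t :: "'a::euclidean_space"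
  assumes "S \<subseteq> Basis" "i \<in> Basis"
  shows "(\<Sum>j\<in>S. (t \<bullet> j) *\<^sub>R j) \<bullet> i = (if i \<in> S then t \<bullet> i else 0)"
proof -
  have "(\<Sum>j\<in>S. (t \<bullet> j) *\<^sub>R j) \<bullet> i = (\<Sum>j\<in>S. if j = i then t \<bullet> i else 0)"
    unfolding inner_sum_left using assms by (intro sum.cong) (auto simp: inner_Basis)
  also have "\<dots> = (if i \<in> S then t \<bullet> i else 0)"
    using finite_subset[OF assms(1)] by simp
  finally show ?thesis .
qed

lemma ball_subset_time_box: "ball (0::'a::euclidean_space) \<delta> \<subseteq> time_box \<delta>"
  unfolding time_box_def by (auto intro: le_less_trans[OF Basis_le_norm])

text \<open>Only the partial derivatives of \<open>F\<close> are controlled, so \<open>F t - F 0\<close> is estimated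
  along the staircase path that changes one coordinate at a time; it stays in the box.\<close>

lemma norm_diff_le_time_box:
  fixes F :: "'a::euclidean_space \<Rightarrow> 'c::real_normed_vector"
  assumes t: "t \<in> time_box \<delta>"
    and deriv: "\<And>s j. s \<in> time_box \<delta> \<Longrightarrow> j \<in> Basis \<Longrightarrow>
              ((\<lambda>r. F (s + r *\<^sub>R j)) has_vector_derivative F' s j) (at 0)"
    and bound: "\<And>s j. s \<in> time_box \<delta> \<Longrightarrow> j \<in> Basis \<Longrightarrow> norm (F' s j) \<le> M"
  shows "norm (F t - F 0) \<le> M * (\<Sum>j\<in>Basis. \<bar>t \<bullet> j\<bar>)"
proof -
  have "norm (F (\<Sum>j\<in>S. (t \<bullet> j) *\<^sub>R j) - F 0) \<le> M * (\<Sum>j\<in>S. \<bar>t \<bullet> j\<bar>)"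
    if "S \<subseteq> Basis" for S
    using finite_subset[OF that finite_Basis] that
  proof (induction S rule: finite_induct)
    case empty
    then show ?case by simp
  next
    case (insert j S)
    define s where "s = (\<Sum>j\<in>S. (t \<bullet> j) *\<^sub>R j)"
    have SB: "S \<subseteq> Basis" and jB: "j \<in> Basis" using insert.prems by auto
    have in_box: "s + r *\<^sub>R j \<in> time_box \<delta>" if "\<bar>r\<bar> \<le> \<bar>t \<bullet> j\<bar>" for r
      unfolding time_box_def
    proof (intro CollectI ballI)
      fix i :: 'a assume iB: "i \<in> Basis"
      have "(s + r *\<^sub>R j) \<bullet> i = (if i \<in> S then t \<bullet> i else 0) + (if i = j then r else 0)"
        using inner_sum_Basis_subset[OF SB iB] iB jB
        by (simp add: s_def inner_add_left inner_Basis)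
      moreover have "\<bar>t \<bullet> i\<bar> < \<delta>" using t iB by (auto simp: time_box_def)
      ultimately show "\<bar>(s + r *\<^sub>R j) \<bullet> i\<bar> < \<delta>"
        using insert.hyps(2) that by auto
    qed
    have "norm (F (s + (t \<bullet> j) *\<^sub>R j) - F (s + 0 *\<^sub>R j)) \<le> M * \<bar>t \<bullet> j\<bar>"
    proof (rule norm_diff_le_closed_segment[where g' = "\<lambda>r. F' (s + r *\<^sub>R j) j"])
      fix r assume "r \<in> closed_segment 0 (t \<bullet> j)"
      then have r: "\<bar>r\<bar> \<le> \<bar>t \<bullet> j\<bar>"
        by (auto simp: closed_segment_eq_real_ivl split: if_splits)
      show "((\<lambda>h. F (s + (r + h) *\<^sub>R j)) has_vector_derivative F' (s + r *\<^sub>R j) j) (at 0)"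
        using deriv[OF in_box[OF r] jB] by (simp add: scaleR_add_left add.assoc)
      show "norm (F' (s + r *\<^sub>R j) j) \<le> M" by (rule bound[OF in_box[OF r] jB])
    qed
    moreover have "norm (F s - F 0) \<le> M * (\<Sum>j\<in>S. \<bar>t \<bullet> j\<bar>)"
      using insert.IH SB by (simp add: s_def)
    ultimately have "norm (F (s + (t \<bullet> j) *\<^sub>R j) - F 0) \<le> M * \<bar>t \<bullet> j\<bar> + M * (\<Sum>j\<in>S. \<bar>t \<bullet> j\<bar>)"
      using norm_diff_triangle_ineq[of "F (s + (t \<bullet> j) *\<^sub>R j)" "F s" "F s" "F 0"] by simp
    then show ?case
      using insert.hyps by (simp add: s_def add.commute distrib_left)
  qed
  from this[of Basis] show ?thesis by (simp add: euclidean_representation)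
qed

lemma l1_norm_small_near_zero:
  fixes M :: real
  shows "\<exists>\<epsilon>>0. \<forall>t::'a::euclidean_space. norm t < \<epsilon> \<longrightarrow> M * (\<Sum>j\<in>Basis. \<bar>t \<bullet> j\<bar>) < 1/2"
proof -
  have "((\<lambda>t::'a. M * (\<Sum>j\<in>Basis. \<bar>t \<bullet> j\<bar>)) \<longlongrightarrow> 0) (nhds 0)"
    by (auto intro!: tendsto_eq_intros filterlim_ident)
  then have "\<forall>\<^sub>F t in nhds (0::'a). M * (\<Sum>j\<in>Basis. \<bar>t \<bullet> j\<bar>) < 1/2"
    by (rule order_tendstoD) simp
  then show ?thesis by (simp add: eventually_nhds_metric dist_norm)
qed

lemma lipschitz_on_uniform_finite:
  assumes "finite I" "\<And>i. i \<in> I \<Longrightarrow> \<exists>C. C-lipschitz_on U (f i)"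
  shows "\<exists>C. \<forall>i\<in>I. C-lipschitz_on U (f i)"
  using assms
proof (induction I rule: finite_induct)
  case empty
  then show ?case by auto
next
  case (insert i I)
  then obtain C C' where "\<forall>j\<in>I. C-lipschitz_on U (f j)" "C'-lipschitz_on U (f i)"
    by blast
  then have "\<forall>j\<in>insert i I. (max C C')-lipschitz_on U (f j)"
    by (auto intro: lipschitz_on_le)
  then show ?case by blast
qed

lemma bilipschitz_open_homeomorphism:
  fixes f :: "'a::euclidean_space \<Rightarrow> 'a"
  assumes U: "open U" and f: "L-lipschitz_on U f" and M: "0 \<le> M"
    and lower: "\<And>p q. p \<in> U \<Longrightarrow> q \<in> U \<Longrightarrow> dist p q \<le> M * dist (f p) (f q)"
  shows "open (f ` U) \<and> homeomorphism U (f ` U) f (inv_into U f) \<and>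
         M-lipschitz_on (f ` U) (inv_into U f)"
proof -
  have inj: "inj_on f U"
    by (rule inj_onI) (use lower in fastforce)
  have cont: "continuous_on U f" by (rule lipschitz_on_continuous_on[OF f])
  have "M-lipschitz_on (f ` U) (inv_into U f)"
    by (rule lipschitz_onI) (auto simp: M inv_into_f_f[OF inj] lower)
  moreover have "homeomorphism U (f ` U) f (inv_into U f)"
    using U cont inj by (simp add: continuous_on_inverse_open homeomorphism_def)
  ultimately show ?thesis
    using invariance_of_domain[OF cont U inj] by blast
qed

locale coordinate_flow =
  fixes D :: "'a::euclidean_space \<Rightarrow> 'a \<times> 'b \<Rightarrow> 'b::euclidean_space"
    and Ob K :: "('a \<times> 'b) set"
    and \<delta> :: real
    and y :: "'a \<Rightarrow> 'a \<times> 'b \<Rightarrow> 'a \<times> 'b"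
    and C L :: real
  assumes D_lipschitz: "\<And>i. i \<in> Basis \<Longrightarrow> C-lipschitz_on Ob (D i)"
    and flow_in: "\<And>t x. t \<in> time_box \<delta> \<Longrightarrow> x \<in> K \<Longrightarrow> y t x \<in> Ob"
    and flow_init: "\<And>x. x \<in> K \<Longrightarrow> y 0 x = x"
    and flow_ode: "\<And>t x j. t \<in> time_box \<delta> \<Longrightarrow> x \<in> K \<Longrightarrow> j \<in> Basis \<Longrightarrow>
         ((\<lambda>s. y (t + s *\<^sub>R j) x) has_vector_derivative coord_field D j (y t x)) (at 0)"
    and flow_lipschitz: "L-lipschitz_on (time_box \<delta> \<times> K) (\<lambda>(t, x). y t x)"
begin

lemma flow_dist_le:
  assumes "t \<in> time_box \<delta>" "x \<in> K" "t' \<in> time_box \<delta>" "x' \<in> K"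
  shows "norm (y t x - y t' x') \<le> L * norm ((t, x) - (t', x'))"
  using lipschitz_on_normD[OF flow_lipschitz, of "(t, x)" "(t', x')"] assms by simp

lemma flow_fst:
  assumes t: "t \<in> time_box \<delta>" and x: "x \<in> K"
  shows "fst (y t x) = fst x + t"
proof -
  have "norm ((fst (y t x) - t) - (fst (y 0 x) - 0)) \<le> 0 * (\<Sum>j\<in>Basis. \<bar>t \<bullet> j\<bar>)"
  proof (rule norm_diff_le_time_box[OF t, where F' = "\<lambda>s j. 0"])
    fix s j :: 'a assume s: "s \<in> time_box \<delta>" and j: "j \<in> Basis"
    have "((\<lambda>r. s + r *\<^sub>R j) has_vector_derivative j) (at 0)"
      by (auto intro!: derivative_eq_intros simp: has_vector_derivative_def)
    from has_vector_derivative_diff[OF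
        bounded_linear.has_vector_derivative[OF bounded_linear_fst flow_ode[OF s x j]] this]
    have "((\<lambda>r. fst (y (s + r *\<^sub>R j) x) - (s + r *\<^sub>R j)) has_vector_derivative
           fst (coord_field D j (y s x)) - j) (at 0)" .
    then show "((\<lambda>r. fst (y (s + r *\<^sub>R j) x) - (s + r *\<^sub>R j)) has_vector_derivative 0) (at 0)"
      by (simp add: coord_field_def)
  qed simp
  then show ?thesis using flow_init[OF x] by (simp add: algebra_simps)
qed

lemma flow_near_identity:
  assumes t: "t \<in> time_box \<delta>" and x: "x \<in> K" and x': "x' \<in> K"
  shows "norm ((y t x - y t x') - (x - x')) \<le> C * L * (\<Sum>j\<in>Basis. \<bar>t \<bullet> j\<bar>) * norm (x - x')"
proof -
  have "norm ((y t x - y t x') - (y 0 x - y 0 x')) \<le> C * L * norm (x - x') * (\<Sum>j\<in>Basis. \<bar>t \<bullet> j\<bar>)"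
  proof (rule norm_diff_le_time_box[OF t,
        where F' = "\<lambda>s j. coord_field D j (y s x) - coord_field D j (y s x')"])
    fix s j :: 'a assume s: "s \<in> time_box \<delta>" and j: "j \<in> Basis"
    show "((\<lambda>r. y (s + r *\<^sub>R j) x - y (s + r *\<^sub>R j) x') has_vector_derivative
            coord_field D j (y s x) - coord_field D j (y s x')) (at 0)"
      by (intro has_vector_derivative_diff flow_ode[OF s x j] flow_ode[OF s x' j])
    have "norm (coord_field D j (y s x) - coord_field D j (y s x')) = norm (D j (y s x) - D j (y s x'))"
      by (simp add: coord_field_def norm_Pair)
    also have "\<dots> \<le> C * norm (y s x - y s x')"
      by (rule lipschitz_on_normD[OF D_lipschitz[OF j] flow_in[OF s x] flow_in[OF s x']])
    also have "\<dots> \<le> C * (L * norm (x - x'))"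
      using flow_dist_le[OF s x s x'] lipschitz_on_nonneg[OF D_lipschitz[OF j]]
      by (intro mult_left_mono) (simp_all add: norm_Pair)
    finally show "norm (coord_field D j (y s x) - coord_field D j (y s x')) \<le> C * L * norm (x - x')"
      by (simp add: mult.assoc)
  qed
  then show ?thesis using flow_init[OF x] flow_init[OF x'] by (simp add: algebra_simps)
qed

lemma flow_expansion_bound:
  assumes t: "t \<in> time_box \<delta>" and x: "x \<in> K" and x': "x' \<in> K"
    and small: "C * L * (\<Sum>j\<in>Basis. \<bar>t \<bullet> j\<bar>) \<le> 1/2"
  shows "norm (x - x') \<le> 2 * norm (y t x - y t x')"
proof -
  have "norm ((y t x - y t x') - (x - x')) \<le> norm (x - x') / 2"
    using flow_near_identity[OF t x x'] mult_right_mono[OF small norm_ge_zero, of "x - x'"]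
    by simp
  moreover have "norm (x - x') \<le> norm (y t x - y t x') + norm ((y t x - y t x') - (x - x'))"
    by (metis norm_minus_commute norm_triangle_sub)
  ultimately show ?thesis by simp
qed

definition graph_domain :: "('a \<times> 'b) set" where
  "graph_domain = {(t, z). t \<in> time_box \<delta> \<and> (0, z) \<in> K}"

abbreviation flow_graph :: "'a \<times> 'b \<Rightarrow> 'a \<times> 'b" where
  "flow_graph \<equiv> \<lambda>(t, z). y t (0, z)"

lemma graph_lipschitz: "L-lipschitz_on graph_domain flow_graph"
proof (rule lipschitz_onI)
  fix p q assume "p \<in> graph_domain" "q \<in> graph_domain"
  then obtain t z t' z' where pq: "p = (t, z)" "q = (t', z')"
    and in_dom: "t \<in> time_box \<delta>" "(0, z) \<in> K" "t' \<in> time_box \<delta>" "(0, z') \<in> K"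
    by (auto simp: graph_domain_def)
  have "norm (y t (0, z) - y t' (0, z')) \<le> L * norm ((t, (0::'a, z)) - (t', (0, z')))"
    using flow_dist_le in_dom by blast
  then show "dist (flow_graph p) (flow_graph q) \<le> L * dist p q"
    by (simp add: pq dist_norm norm_Pair)
qed (rule lipschitz_on_nonneg[OF flow_lipschitz])

text \<open>The \<open>t\<close>-part of the distance is read off the first coordinate of the graph; the
  \<open>z\<close>-part is recovered by comparing at the common time \<open>t\<close> and moving \<open>t'\<close> to \<open>t\<close>.\<close>

lemma graph_lower_bound:
  assumes p: "(t, z) \<in> graph_domain" and q: "(t', z') \<in> graph_domain"
    and small: "C * L * (\<Sum>j\<in>Basis. \<bar>t \<bullet> j\<bar>) \<le> 1/2"
  shows "dist (t, z) (t', z') \<le> (3 + 2 * L) * dist (y t (0, z)) (y t' (0, z'))"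
proof -
  have in_dom: "t \<in> time_box \<delta>" "(0, z) \<in> K" "t' \<in> time_box \<delta>" "(0, z') \<in> K"
    using p q by (auto simp: graph_domain_def)
  define n where "n = norm (y t (0, z) - y t' (0, z'))"
  have L: "0 \<le> L" by (rule lipschitz_on_nonneg[OF flow_lipschitz])
  have "fst (y t (0, z) - y t' (0, z')) = t - t'"
    using flow_fst[OF in_dom(1,2)] flow_fst[OF in_dom(3,4)] by simp
  then have dt: "norm (t - t') \<le> n"
    unfolding n_def by (metis norm_fst_le prod.collapse)
  have "norm (z - z') \<le> 2 * norm (y t (0, z) - y t (0, z'))"
    using flow_expansion_bound[OF in_dom(1,2,4) small] by (simp add: norm_Pair)
  moreover have "norm (y t (0, z) - y t (0, z')) \<le> n + norm (y t (0, z') - y t' (0, z'))"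
    unfolding n_def by (rule norm_diff_triangle_le[where y = "y t' (0, z')"])
      (simp_all add: norm_minus_commute)
  moreover have "norm (y t (0, z') - y t' (0, z')) \<le> L * norm (t - t')"
    using flow_dist_le[OF in_dom(1,4,3,4)] by (simp add: norm_Pair)
  ultimately have dz: "norm (z - z') \<le> 2 * n + 2 * (L * n)"
    using mult_left_mono[OF dt L] by linarith
  have "dist (t, z) (t', z') \<le> norm (t - t') + norm (z - z')"
    using norm_Pair_le[of "t - t'" "z - z'"] by (simp add: dist_norm)
  also have "\<dots> \<le> (3 + 2 * L) * n" using dt dz by (simp add: algebra_simps)
  finally show ?thesis by (simp add: n_def dist_norm)
qed

lemma graph_bilipschitz_near_origin:
  assumes K: "0 \<in> interior K" and \<delta>: "0 < \<delta>"
  obtains U0 where "open U0" "(0, 0) \<in> U0" "U0 \<subseteq> graph_domain"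
    "\<And>p q. p \<in> U0 \<Longrightarrow> q \<in> U0 \<Longrightarrow> dist p q \<le> (3 + 2 * L) * dist (flow_graph p) (flow_graph q)"
proof -
  obtain \<epsilon> where "\<epsilon> > 0"
    and small: "\<And>t::'a. norm t < \<epsilon> \<Longrightarrow> C * L * (\<Sum>j\<in>Basis. \<bar>t \<bullet> j\<bar>) < 1/2"
    using l1_norm_small_near_zero by blast
  obtain r where "r > 0" "ball 0 r \<subseteq> K" using K mem_interior by blast
  define U0 where "U0 = ball (0::'a) (min \<delta> \<epsilon>) \<times> ball (0::'b) r"
  have U0_sub: "U0 \<subseteq> graph_domain"
  proof
    fix p assume "p \<in> U0"
    then obtain t z where "p = (t, z)" "norm t < \<delta>" "norm z < r"
      by (auto simp: U0_def)
    then show "p \<in> graph_domain"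
      using ball_subset_time_box[of \<delta>] \<open>ball 0 r \<subseteq> K\<close>
      by (auto simp: graph_domain_def norm_Pair)
  qed
  have "dist p q \<le> (3 + 2 * L) * dist (flow_graph p) (flow_graph q)" if "p \<in> U0" "q \<in> U0" for p q
  proof -
    obtain t z t' z' where pq: "p = (t, z)" "q = (t', z')"
      by (cases p, cases q) auto
    then have "norm t < \<epsilon>" using that(1) by (auto simp: U0_def)
    then have "C * L * (\<Sum>j\<in>Basis. \<bar>t \<bullet> j\<bar>) \<le> 1/2"
      using small by (simp add: less_imp_le)
    moreover have "(t, z) \<in> graph_domain" "(t', z') \<in> graph_domain"
      using that pq U0_sub by auto
    ultimately show ?thesis
      using graph_lower_bound by (simp add: pq)
  qed
  moreover have "open U0" "(0, 0) \<in> U0"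
    using \<delta> \<open>\<epsilon> > 0\<close> \<open>r > 0\<close> by (auto simp: U0_def open_Times)
  ultimately show ?thesis using that U0_sub by blast
qed

end

theorem proposition2p3:
  fixes D :: "'a::euclidean_space \<Rightarrow> 'a \<times> 'b \<Rightarrow> 'b::euclidean_space"
    and Ob :: "('a \<times> 'b) set"
    and y :: "'a \<Rightarrow> 'a \<times> 'b \<Rightarrow> 'a \<times> 'b"
    and K :: "('a \<times> 'b) set"
    and \<delta> :: real
  assumes O_open: "open Ob" and O0: "0 \<in> Ob"
    and D_lip: "\<And>i. i \<in> Basis \<Longrightarrow> \<exists>C. C-lipschitz_on Ob (D i)"
    and D0: "\<And>i. i \<in> Basis \<Longrightarrow> D i 0 = 0"
    and commute: "\<And>i j. i \<in> Basis \<Longrightarrow> j \<in> Basis \<Longrightarrow>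
                    bracket_zero_ae Ob (coord_field D i) (coord_field D j)"
    and \<delta>_pos: "\<delta> > 0"
    and K_compact: "compact K" and K_nbhd: "0 \<in> interior K" and K_O: "K \<subseteq> Ob"
    and y_in: "\<And>t x. t \<in> time_box \<delta> \<Longrightarrow> x \<in> K \<Longrightarrow> y t x \<in> Ob"
    and y_init: "\<And>x. x \<in> K \<Longrightarrow> y 0 x = x"
    and y_ode: "\<And>t x j. t \<in> time_box \<delta> \<Longrightarrow> x \<in> K \<Longrightarrow> j \<in> Basis \<Longrightarrow>
                  ((\<lambda>s. y (t + s *\<^sub>R j) x) has_vector_derivative
                      coord_field D j (y t x)) (at 0)"
    and y_lip: "\<exists>L. L-lipschitz_on (time_box \<delta> \<times> K) (\<lambda>(t, x). y t x)"
  shows "\<exists>U0 U1 G'. open U0 \<and> (0, 0) \<in> U0 \<and>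
           U0 \<subseteq> {(t, z). t \<in> time_box \<delta> \<and> (0, z) \<in> K} \<and>
           open U1 \<and> 0 \<in> U1 \<and> U1 \<subseteq> Ob \<and>
           homeomorphism U0 U1 (\<lambda>(t, z). y t (0, z)) G' \<and>
           (\<exists>L. L-lipschitz_on U0 (\<lambda>(t, z). y t (0, z))) \<and>
           (\<exists>L'. L'-lipschitz_on U1 G')"
proof -
  have "\<exists>C. \<forall>i\<in>Basis. C-lipschitz_on Ob (D i)"
    by (rule lipschitz_on_uniform_finite[OF finite_Basis D_lip])
  then obtain C where C: "\<forall>i\<in>Basis. C-lipschitz_on Ob (D i)" ..
  obtain L where L: "L-lipschitz_on (time_box \<delta> \<times> K) (\<lambda>(t, x). y t x)"
    using y_lip by blast
  interpret coordinate_flow D Ob K \<delta> y C L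
    using C by unfold_locales (auto intro: y_in y_init y_ode L)
  obtain U0 where U0: "open U0" "(0, 0) \<in> U0" "U0 \<subseteq> graph_domain"
    and lower: "\<And>p q. p \<in> U0 \<Longrightarrow> q \<in> U0 \<Longrightarrow>
                  dist p q \<le> (3 + 2 * L) * dist (flow_graph p) (flow_graph q)"
    using graph_bilipschitz_near_origin[OF K_nbhd \<delta>_pos] by blast
  have G_lip: "L-lipschitz_on U0 flow_graph"
    by (rule lipschitz_on_subset[OF graph_lipschitz U0(3)])
  have "0 \<le> 3 + 2 * L" using lipschitz_on_nonneg[OF L] by simp
  from bilipschitz_open_homeomorphism[OF U0(1) G_lip this lower]
  have G_homeo: "open (flow_graph ` U0)"
      "homeomorphism U0 (flow_graph ` U0) flow_graph (inv_into U0 flow_graph)"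
      "(3 + 2 * L)-lipschitz_on (flow_graph ` U0) (inv_into U0 flow_graph)"
    by auto
  have "flow_graph (0, 0) = 0"
    using flow_init K_nbhd interior_subset by (auto simp: zero_prod_def)
  then have "0 \<in> flow_graph ` U0" using U0(2) by (metis image_eqI)
  moreover have "flow_graph ` U0 \<subseteq> Ob"
    using U0(3) flow_in by (auto simp: graph_domain_def)
  ultimately show ?thesis
    unfolding graph_domain_def[symmetric] using U0 G_lip G_homeo by blast
qed

end
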